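(* In the setting described in the context, $\sup_{t\ge0}E\lVert\hat{x}(t)\rVert^2<\infty$.
   Context: Setting. $S$ is a compact metric space; $h:\mathbb{R}^d\times S\to\mathbb{R}^d$ is jointly continuous and there is $L>0$ with $\lVert h(x_1,y)-h(x_2,y)\rVert\le L\lVert x_1-x_2\rVert$ for all $x_1,x_2,y$. Step sizes $a(n)>0$ satisfy $\sum_n a(n)=\infty$, $\sum_n a(n)^2<\infty$, $\sup_n a(n)\le1$. On a probability space with filtration $\{\mathcal{F}_n\}$, $\{y_n\}_{n\ge0}$ is an $S$-valued adapted process, $x_0$ is $\mathcal{F}_0$-measurable, $\{M_n\}_{n\ge1}$ is a square-integrable martingale difference sequence ($M_{n+1}$ is $\mathcal{F}_{n+1}$-measurable, $E[M_{n+1}\mid\mathcal{F}_n]=0$) with $E[\lVert M_{n+1}\rVert^2\mid\mathcal{F}_n]\le K(1+\lVert x_n\rVert^2)$ for some constant $K>0$, and $x_{n+1}=x_n+a(n)[h(x_n,y_n)+M_{n+1}]$. For $c\ge1$, $h_c(x,y):=h(cx,y)/c$. Rescaled trajectory. Fix $T>0$. Let $t(0)=0$, $t(n)=\sum_{i=0}^{n-1}a(i)$; let $\bar x$ be the piecewise linear interpolation with $\bar x(t(n))=x_n$, linear on each $[t(n),t(n+1)]$. Let $T_0=0$, $T_n=\min\{t(m):t(m)\ge T_{n-1}+T\}$, and $m(n)$ the index with $t(m(n))=T_n$. Let $r(n)=\lVert\bar x(T_n)\rVert\vee1$ and, for $t\in[T_n,T_{n+1})$, $\hat x(t)=\bar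 x(t)/r(n)$; let $\hat M_{k+1}=M_{k+1}/r(n)$ when $t(k)\in[T_n,T_{n+1})$. *)

theory Defs
  imports "HOL-Probability.Probability"
begin

definition sa_time :: "(nat \<Rightarrow> real) \<Rightarrow> nat \<Rightarrow> real" where
  "sa_time a n = (\<Sum>i<n. a i)"

definition sa_idx :: "(nat \<Rightarrow> real) \<Rightarrow> real \<Rightarrow> nat" where
  "sa_idx a t = (THE n. sa_time a n \<le> t \<and> t < sa_time a (Suc n))"

definition sa_xbar :: "(nat \<Rightarrow> real) \<Rightarrow> (nat \<Rightarrow> 'w \<Rightarrow> 'd::real_vector) \<Rightarrow> real \<Rightarrow> 'w \<Rightarrow> 'd" where
  "sa_xbar a x t \<omega> =
     (let n = sa_idx a t in
        x n \<omega> + ((t - sa_time a n) / a n) *\<^sub>R (x (Suc n) \<omega> - x n \<omega>))"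

fun sa_T :: "(nat \<Rightarrow> real) \<Rightarrow> real \<Rightarrow> nat \<Rightarrow> real" where
  "sa_T a T 0 = 0"
| "sa_T a T (Suc n) = sa_time a (LEAST m. sa_time a m \<ge> sa_T a T n + T)"

definition sa_r :: "(nat \<Rightarrow> real) \<Rightarrow> real \<Rightarrow> (nat \<Rightarrow> 'w \<Rightarrow> 'd::real_normed_vector) \<Rightarrow> nat \<Rightarrow> 'w \<Rightarrow> real" where
  "sa_r a T x n \<omega> = max (norm (sa_xbar a x (sa_T a T n) \<omega>)) 1"

definition sa_block :: "(nat \<Rightarrow> real) \<Rightarrow> real \<Rightarrow> real \<Rightarrow> nat" where
  "sa_block a T t = (THE n. sa_T a T n \<le> t \<and> t < sa_T a T (Suc n))"

definition sa_xhat :: "(nat \<Rightarrow> real) \<Rightarrow> real \<Rightarrow> (nat \<Rightarrow> 'w \<Rightarrow> 'd::real_normed_vector) \<Rightarrow> real \<Rightarrow> 'w \<Rightarrow> 'd" where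
  "sa_xhat a T x t \<omega> = (1 / sa_r a T x (sa_block a T t) \<omega>) *\<^sub>R sa_xbar a x t \<omega>"

end

theory Submission
  imports Defs
begin

text \<open>
  Fix a block \<open>[T_n, T_{n+1})\<close> and divide the iterates by \<open>r(n) \<ge> 1\<close>, which is
  \<open>F_{m(n)}\<close>-measurable. Linear growth of \<open>h\<close> and the conditional variance bound on the
  noise give \<open>E_{j+1} \<le> (1 + C a(j)) E_j + C a(j)\<close> for the scaled second moments
  \<open>E_j = E[\<parallel>x_j\<parallel>\<^sup>2 / r(n)\<^sup>2]\<close>, \<open>j \<ge> m(n)\<close>, with \<open>C\<close> independent of \<open>n\<close> and \<open>j\<close>.
  Since \<open>E_{m(n)} \<le> 1\<close> and a block has length at most \<open>T + 1\<close>, a discrete Gronwall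
  argument bounds \<open>E_j\<close> by \<open>2 exp(C (T + 1))\<close> throughout the block, and the
  interpolated trajectory is a convex combination of two consecutive iterates of the block.
\<close>

section \<open>Measurability of Caratheodory functions\<close>

definition grid_round :: "nat \<Rightarrow> 'a::euclidean_space \<Rightarrow> 'a" where
  "grid_round k u = (\<Sum>i\<in>Basis. (real_of_int \<lfloor>(real k + 1) * (u \<bullet> i)\<rfloor> / (real k + 1)) *\<^sub>R i)"

lemma countable_range_grid_round: "countable (range (grid_round k :: 'a::euclidean_space \<Rightarrow> 'a))"
proof -
  let ?point = "\<lambda>f. \<Sum>i\<in>Basis. (real_of_int (f i) / (real k + 1)) *\<^sub>R (i :: 'a)"
  have "range (grid_round k) \<subseteq> ?point ` (Basis \<rightarrow>\<^sub>E (UNIV :: int set))"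
  proof
    fix z :: 'a
    assume "z \<in> range (grid_round k)"
    then obtain u where z: "z = grid_round k u" by auto
    show "z \<in> ?point ` (Basis \<rightarrow>\<^sub>E UNIV)"
      by (rule image_eqI[where x = "restrict (\<lambda>i. \<lfloor>(real k + 1) * (u \<bullet> i)\<rfloor>) Basis"])
         (auto simp: z grid_round_def intro!: sum.cong)
  qed
  moreover have "countable (Basis \<rightarrow>\<^sub>E (UNIV :: int set))"
    by (rule countable_PiE) auto
  ultimately show ?thesis
    by (blast intro: countable_image countable_subset)
qed

lemma borel_measurable_grid_round [measurable]: "grid_round k \<in> borel_measurable borel"
  unfolding grid_round_def by measurable

lemma floor_scaled_tendsto: "(\<lambda>k. real_of_int \<lfloor>(real k + 1) * c\<rfloor> / (real k + 1)) \<longlonglongrightarrow> c"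
proof (rule tendsto_sandwich)
  show "\<forall>\<^sub>F k in sequentially. c - 1 / (real k + 1) \<le> real_of_int \<lfloor>(real k + 1) * c\<rfloor> / (real k + 1)"
  proof (intro always_eventually allI)
    fix k :: nat
    have "c - 1 / (real k + 1) = ((real k + 1) * c - 1) / (real k + 1)"
      by (simp add: field_simps)
    also have "\<dots> \<le> real_of_int \<lfloor>(real k + 1) * c\<rfloor> / (real k + 1)"
      by (rule divide_right_mono) linarith+
    finally show "c - 1 / (real k + 1) \<le> real_of_int \<lfloor>(real k + 1) * c\<rfloor> / (real k + 1)" .
  qed
  show "\<forall>\<^sub>F k in sequentially. real_of_int \<lfloor>(real k + 1) * c\<rfloor> / (real k + 1) \<le> c"
  proof (intro always_eventually allI)
    fix k :: nat
    have "real_of_int \<lfloor>(real k + 1) * c\<rfloor> \<le> (real k + 1) * c"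
      by linarith
    then show "real_of_int \<lfloor>(real k + 1) * c\<rfloor> / (real k + 1) \<le> c"
      by (simp add: divide_le_eq mult.commute)
  qed
  have "(\<lambda>k. 1 / (real k + 1)) \<longlonglongrightarrow> 0"
    using LIMSEQ_inverse_real_of_nat by (simp add: inverse_eq_divide add.commute)
  then show "(\<lambda>k. c - 1 / (real k + 1)) \<longlonglongrightarrow> c"
    using tendsto_diff[OF tendsto_const, of _ 0 sequentially c] by simp
qed simp

lemma grid_round_tendsto: "(\<lambda>k. grid_round k u) \<longlonglongrightarrow> u"
proof -
  have "(\<lambda>k. grid_round k u) \<longlonglongrightarrow> (\<Sum>i\<in>Basis. (u \<bullet> i) *\<^sub>R i)"
    unfolding grid_round_def
    by (intro tendsto_sum tendsto_scaleR tendsto_const floor_scaled_tendsto)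
  then show ?thesis
    by (simp add: euclidean_representation)
qed

text \<open>
  On the countably many level sets of \<open>grid_round k \<circ> X\<close> the first argument is frozen;
  continuity in the first argument then lets \<open>k \<rightarrow> \<infinity>\<close>.
\<close>

lemma borel_measurable_caratheodory:
  fixes h :: "'a::euclidean_space \<Rightarrow> 'b::topological_space \<Rightarrow> 'c::metric_space"
  assumes cont_first: "\<And>u v. v \<in> S \<Longrightarrow> isCont (\<lambda>u. h u v) u"
    and cont_second: "\<And>u. continuous_on S (h u)"
    and X: "X \<in> borel_measurable N" and Y: "Y \<in> borel_measurable N"
    and Y_in_S: "\<And>\<omega>. \<omega> \<in> space N \<Longrightarrow> Y \<omega> \<in> S"
  shows "(\<lambda>\<omega>. h (X \<omega>) (Y \<omega>)) \<in> borel_measurable N"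
proof (rule borel_measurable_LIMSEQ_metric)
  have Y_restrict: "Y \<in> measurable N (restrict_space borel S)"
    using Y_in_S Y by (intro measurable_restrict_space2) auto
  have h_fixed_first: "(\<lambda>\<omega>. h u (Y \<omega>)) \<in> borel_measurable N" for u
    using measurable_comp[OF Y_restrict borel_measurable_continuous_on_restrict[OF cont_second]]
    by (simp add: o_def)
  fix k
  let ?level = "\<lambda>u. {\<omega>. grid_round k (X \<omega>) = u}"
  show "(\<lambda>\<omega>. h (grid_round k (X \<omega>)) (Y \<omega>)) \<in> borel_measurable N"
  proof (rule measurable_piecewise_restrict[where C = "?level ` range (grid_round k)"])
    show "countable (?level ` range (grid_round k))"
      using countable_range_grid_round by blast
    show "space N \<subseteq> \<Union> (?level ` range (grid_round k))"
      by auto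
    fix \<Omega>
    assume "\<Omega> \<in> ?level ` range (grid_round k)"
    then obtain u where \<Omega>: "\<Omega> = ?level u" by auto
    have "\<Omega> \<inter> space N = {\<omega> \<in> space N. grid_round k (X \<omega>) = u}"
      using \<Omega> by auto
    also have "\<dots> \<in> sets N"
      using X by measurable
    finally show "\<Omega> \<inter> space N \<in> sets N" .
    have "(\<lambda>\<omega>. h u (Y \<omega>)) \<in> borel_measurable (restrict_space N \<Omega>)"
      by (rule measurable_restrict_space1[OF h_fixed_first])
    then show "(\<lambda>\<omega>. h (grid_round k (X \<omega>)) (Y \<omega>)) \<in> borel_measurable (restrict_space N \<Omega>)"
      by (rule measurable_cong[THEN iffD1, rotated]) (auto simp: \<Omega> space_restrict_space)
  qed
next
  fix \<omega>
  assume "\<omega> \<in> space N"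
  then show "(\<lambda>k. h (grid_round k (X \<omega>)) (Y \<omega>)) \<longlonglongrightarrow> h (X \<omega>) (Y \<omega>)"
    using cont_first[OF Y_in_S] grid_round_tendsto isCont_tendsto_compose by blast
qed

section \<open>The time scale\<close>

lemma ex1_strict_mono_bracket:
  fixes f :: "nat \<Rightarrow> real"
  assumes mono: "strict_mono f" and start: "f 0 \<le> t" and unbounded: "\<And>B. \<exists>n. B \<le> f n"
  shows "\<exists>!n. f n \<le> t \<and> t < f (Suc n)"
proof -
  obtain N where "t + 1 \<le> f N"
    using unbounded by blast
  then have N: "t < f N" by simp
  define K where "K = (LEAST n. t < f n)"
  have K: "t < f K"
    unfolding K_def by (rule LeastI[of _ N]) (rule N)
  then obtain n where Kn: "K = Suc n"
    using start by (cases K) auto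
  have "\<not> t < f n"
    using not_less_Least[of n "\<lambda>n. t < f n"] Kn K_def by auto
  then have bracket: "f n \<le> t \<and> t < f (Suc n)"
    using K Kn by auto
  show ?thesis
  proof (rule ex1I[of _ n])
    fix m
    assume m: "f m \<le> t \<and> t < f (Suc m)"
    have "f (Suc m) \<le> f n" if "Suc m \<le> n"
      using that mono by (simp add: strict_mono_less_eq)
    moreover have "f (Suc n) \<le> f m" if "Suc n \<le> m"
      using that mono by (simp add: strict_mono_less_eq)
    ultimately show "m = n"
      using m bracket by (meson leD not_less_eq_eq order.strict_trans1 linorder_neqE_nat Suc_leI)
  qed (rule bracket)
qed

locale step_sizes =
  fixes a :: "nat \<Rightarrow> real"
  assumes a_pos: "\<And>n. 0 < a n"
    and a_not_summable: "\<not> summable a"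
    and a_le1: "\<And>n. a n \<le> 1"

lemma sa_time_0 [simp]: "sa_time a 0 = 0"
  by (simp add: sa_time_def)

lemma sa_time_Suc: "sa_time a (Suc n) = sa_time a n + a n"
  by (simp add: sa_time_def)

lemma sa_time_diff: "m \<le> j \<Longrightarrow> sa_time a j - sa_time a m = (\<Sum>i\<in>{m..<j}. a i)"
  unfolding sa_time_def lessThan_atLeast0 by (rule sum_diff_nat_ivl) auto

definition sa_T_index :: "(nat \<Rightarrow> real) \<Rightarrow> real \<Rightarrow> nat \<Rightarrow> nat" where
  "sa_T_index a T n = (case n of 0 \<Rightarrow> 0 | Suc k \<Rightarrow> (LEAST m. sa_time a m \<ge> sa_T a T k + T))"

lemma sa_T_eq_sa_time: "sa_T a T n = sa_time a (sa_T_index a T n)"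
  by (cases n) (auto simp: sa_T_index_def)

context step_sizes
begin

lemma strict_mono_sa_time: "strict_mono (sa_time a)"
  by (rule strict_mono_Suc_iff[THEN iffD2]) (simp add: sa_time_Suc a_pos)

lemma sa_time_unbounded: "\<exists>n. B \<le> sa_time a n"
proof (rule ccontr)
  assume "\<not> (\<exists>n. B \<le> sa_time a n)"
  then have "summable a"
    using a_pos less_imp_le
    by (intro summableI_nonneg_bounded[where x = B]) (auto simp: sa_time_def not_le)
  then show False
    using a_not_summable by simp
qed

lemma sa_time_nonneg: "0 \<le> sa_time a n"
  using strict_mono_less_eq[OF strict_mono_sa_time, of 0 n] by simp

lemma sa_idx_bracket:
  assumes "0 \<le> t"
  shows "sa_time a (sa_idx a t) \<le> t \<and> t < sa_time a (Suc (sa_idx a t))"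
proof -
  have "\<exists>!n. sa_time a n \<le> t \<and> t < sa_time a (Suc n)"
    using assms strict_mono_sa_time sa_time_unbounded by (intro ex1_strict_mono_bracket) auto
  then show ?thesis
    unfolding sa_idx_def by (rule theI')
qed

lemma sa_idx_sa_time [simp]: "sa_idx a (sa_time a m) = m"
proof -
  have "sa_time a m < sa_time a (Suc m)"
    using a_pos by (simp add: sa_time_Suc)
  moreover have "\<exists>!n. sa_time a n \<le> sa_time a m \<and> sa_time a m < sa_time a (Suc n)"
    using strict_mono_sa_time sa_time_unbounded sa_time_nonneg
    by (intro ex1_strict_mono_bracket) auto
  ultimately show ?thesis
    unfolding sa_idx_def by (intro the1_equality) auto
qed

lemma sa_xbar_sa_time [simp]: "sa_xbar a x (sa_time a m) \<omega> = x m \<omega>"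
  by (simp add: sa_xbar_def Let_def)

lemma sa_T_step_ge: "sa_T a T n + T \<le> sa_T a T (Suc n)"
  using sa_time_unbounded[of "sa_T a T n + T"]
  by (auto intro: LeastI[where P = "\<lambda>m. sa_T a T n + T \<le> sa_time a m"])

lemma sa_T_step_le:
  assumes "0 < T"
  shows "sa_T a T (Suc n) \<le> sa_T a T n + T + 1"
proof -
  define K where "K = (LEAST m. sa_T a T n + T \<le> sa_time a m)"
  have "sa_T a T n + T \<le> sa_time a K"
    using sa_T_step_ge by (simp add: K_def)
  moreover have "0 \<le> sa_T a T n"
    using sa_time_nonneg by (simp add: sa_T_eq_sa_time[of a T n])
  ultimately have "K \<noteq> 0"
    using assms by (cases "K = 0") auto
  then obtain j where j: "K = Suc j"
    using not0_implies_Suc by blast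
  have "\<not> sa_T a T n + T \<le> sa_time a j"
    using not_less_Least[of j "\<lambda>m. sa_T a T n + T \<le> sa_time a m"] j K_def by auto
  then show ?thesis
    using a_le1[of j] by (simp add: K_def[symmetric] j sa_time_Suc)
qed

lemma sa_block_bracket:
  assumes "0 < T" and "0 \<le> t"
  shows "sa_T a T (sa_block a T t) \<le> t \<and> t < sa_T a T (Suc (sa_block a T t))"
proof -
  have mono: "strict_mono (sa_T a T)"
    using assms(1) sa_T_step_ge by (intro strict_mono_Suc_iff[THEN iffD2]) (smt (verit))
  have linear: "real n * T \<le> sa_T a T n" for n
  proof (induction n)
    case (Suc n)
    then show ?case
      using sa_T_step_ge[of T n] by (simp add: algebra_simps del: sa_T.simps)
  qed simp
  have unbounded: "\<exists>n. B \<le> sa_T a T n" for B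
  proof -
    obtain n where "B / T \<le> real n"
      using real_arch_simple by blast
    then have "B \<le> real n * T"
      using assms(1) by (simp add: field_simps)
    then show ?thesis
      using linear order_trans by blast
  qed
  have "\<exists>!n. sa_T a T n \<le> t \<and> t < sa_T a T (Suc n)"
    using mono assms(2) unbounded by (intro ex1_strict_mono_bracket) auto
  then show ?thesis
    unfolding sa_block_def by (rule theI')
qed

lemma sa_idx_within_block:
  assumes "0 < T" and "0 \<le> t"
  shows "sa_T_index a T (sa_block a T t) \<le> sa_idx a t"
    and "Suc (sa_idx a t) \<le> sa_T_index a T (Suc (sa_block a T t))"
  using sa_block_bracket[OF assms] sa_idx_bracket[OF assms(2)]
    strict_mono_less[OF strict_mono_sa_time]
  unfolding sa_T_eq_sa_time by (metis Suc_leI order.strict_trans1 not_less_eq_eq)+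

lemma sum_a_within_block:
  assumes "0 < T" and m: "m = sa_T_index a T n" and j: "j \<le> sa_T_index a T (Suc n)"
  shows "(\<Sum>i\<in>{m..<j}. a i) \<le> T + 1"
proof -
  have "(\<Sum>i\<in>{m..<j}. a i) \<le> (\<Sum>i\<in>{m..<sa_T_index a T (Suc n)}. a i)"
    using j a_pos less_imp_le by (intro sum_mono2) auto
  also have "\<dots> = sa_T a T (Suc n) - sa_T a T n"
  proof -
    have "sa_T a T n \<le> sa_T a T (Suc n)"
      using sa_T_step_ge[of T n] assms(1) by simp
    then have "m \<le> sa_T_index a T (Suc n)"
      using strict_mono_less_eq[OF strict_mono_sa_time] by (simp add: m sa_T_eq_sa_time)
    then show ?thesis
      by (simp add: m sa_T_eq_sa_time sa_time_diff)
  qed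
  also have "\<dots> \<le> T + 1"
    using sa_T_step_le[OF assms(1), of n] by linarith
  finally show ?thesis .
qed

end

lemma norm_interpolation_le:
  fixes u v :: "'a::real_normed_vector"
  assumes "0 \<le> \<theta>" and "\<theta> \<le> 1"
  shows "norm (u + \<theta> *\<^sub>R (v - u)) \<le> max (norm u) (norm v)"
proof -
  have "norm (u + \<theta> *\<^sub>R (v - u)) = norm ((1 - \<theta>) *\<^sub>R u + \<theta> *\<^sub>R v)"
    by (simp add: algebra_simps)
  also have "\<dots> \<le> (1 - \<theta>) * norm u + \<theta> * norm v"
    using norm_triangle_ineq[of "(1 - \<theta>) *\<^sub>R u" "\<theta> *\<^sub>R v"] assms by simp
  also have "\<dots> \<le> (1 - \<theta>) * max (norm u) (norm v) + \<theta> * max (norm u) (norm v)"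
    using assms by (intro add_mono mult_left_mono) auto
  finally show ?thesis
    by (simp add: algebra_simps)
qed

lemma (in step_sizes) norm_sa_xbar_le:
  assumes "0 \<le> t"
  shows "norm (sa_xbar a x t \<omega>) \<le> max (norm (x (sa_idx a t) \<omega>)) (norm (x (Suc (sa_idx a t)) \<omega>))"
  unfolding sa_xbar_def Let_def
  using sa_idx_bracket[OF assms] a_pos[of "sa_idx a t"]
  by (intro norm_interpolation_le) (auto simp: sa_time_Suc)

lemma (in step_sizes) sa_r_eq: "sa_r a T x n \<omega> = max (norm (x (sa_T_index a T n) \<omega>)) 1"
  by (simp add: sa_r_def sa_T_eq_sa_time)

lemma (in step_sizes) sa_xhat_sq_le:
  fixes x :: "nat \<Rightarrow> 'w \<Rightarrow> 'd::real_normed_vector" and T t :: real and \<omega> :: 'w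
  assumes "0 \<le> t"
  defines "k \<equiv> sa_idx a t" and "\<rho> \<equiv> sa_r a T x (sa_block a T t) \<omega>"
  shows "(norm (sa_xhat a T x t \<omega>))\<^sup>2 \<le> (norm (x k \<omega>) / \<rho>)\<^sup>2 + (norm (x (Suc k) \<omega>) / \<rho>)\<^sup>2"
proof -
  have "1 \<le> \<rho>"
    by (simp add: \<rho>_def sa_r_def)
  then have "(norm (sa_xhat a T x t \<omega>))\<^sup>2 = (norm (sa_xbar a x t \<omega>))\<^sup>2 / \<rho>\<^sup>2"
    by (simp add: sa_xhat_def \<rho>_def power_divide)
  also have "\<dots> \<le> ((norm (x k \<omega>))\<^sup>2 + (norm (x (Suc k) \<omega>))\<^sup>2) / \<rho>\<^sup>2"
  proof (rule divide_right_mono)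
    have "(norm (sa_xbar a x t \<omega>))\<^sup>2 \<le> (max (norm (x k \<omega>)) (norm (x (Suc k) \<omega>)))\<^sup>2"
      using norm_sa_xbar_le[OF assms(1)] by (intro power_mono) (simp_all add: k_def)
    also have "\<dots> \<le> (norm (x k \<omega>))\<^sup>2 + (norm (x (Suc k) \<omega>))\<^sup>2"
      by (simp add: max_def)
    finally show "(norm (sa_xbar a x t \<omega>))\<^sup>2 \<le> (norm (x k \<omega>))\<^sup>2 + (norm (x (Suc k) \<omega>))\<^sup>2" .
  qed simp
  also have "\<dots> = (norm (x k \<omega>) / \<rho>)\<^sup>2 + (norm (x (Suc k) \<omega>) / \<rho>)\<^sup>2"
    by (simp add: power_divide add_divide_distrib)
  finally show ?thesis .
qed

section \<open>The one-step estimate\<close>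

lemma sq_add_scaled_le:
  fixes W k \<alpha> :: real
  assumes "0 \<le> \<alpha>" and "\<alpha> \<le> 1"
  shows "(W + \<alpha> * k)\<^sup>2 \<le> (1 + \<alpha>) * W\<^sup>2 + 2 * \<alpha> * k\<^sup>2"
proof -
  have "2 * W * (\<alpha> * k) \<le> \<alpha> * W\<^sup>2 + \<alpha> * k\<^sup>2"
    using mult_left_mono[OF zero_le_power2[of "W - k"] assms(1)]
    by (simp add: power2_eq_square algebra_simps)
  moreover have "\<alpha>\<^sup>2 * k\<^sup>2 \<le> \<alpha> * k\<^sup>2"
    using assms by (intro mult_right_mono) (auto simp: power2_eq_square mult_left_le_one_le)
  ultimately show ?thesis
    by (simp add: power2_eq_square algebra_simps)
qed

lemma sq_affine_le:
  fixes \<alpha> L H n :: real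
  defines "c \<equiv> 2 * L + L\<^sup>2 + (1 + L) * H + H\<^sup>2"
  assumes \<alpha>: "0 \<le> \<alpha>" "\<alpha> \<le> 1" and "0 \<le> L" and "0 \<le> H" and "0 \<le> n"
  shows "((1 + \<alpha> * L) * n + \<alpha> * H)\<^sup>2 \<le> (1 + c * \<alpha>) * n\<^sup>2 + c * \<alpha>"
proof -
  have square: "(1 + \<alpha> * L)\<^sup>2 \<le> 1 + \<alpha> * (2 * L + L\<^sup>2)"
    using mult_right_mono[of "\<alpha>\<^sup>2" \<alpha> "L\<^sup>2"] \<alpha>
    by (simp add: power2_eq_square algebra_simps mult_left_le_one_le)
  have cross: "2 * (1 + \<alpha> * L) * \<alpha> * H * n \<le> (1 + L) * \<alpha> * H * (1 + n\<^sup>2)"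
  proof -
    have "2 * n \<le> 1 + n\<^sup>2"
      using zero_le_power2[of "n - 1"] by (simp add: power2_eq_square algebra_simps)
    moreover have "1 + \<alpha> * L \<le> 1 + L"
      using \<alpha> \<open>0 \<le> L\<close> by (simp add: mult_left_le_one_le)
    ultimately have "(1 + \<alpha> * L) * (2 * n) \<le> (1 + L) * (1 + n\<^sup>2)"
      using \<alpha> assms by (intro mult_mono) auto
    then have "(\<alpha> * H) * ((1 + \<alpha> * L) * (2 * n)) \<le> (\<alpha> * H) * ((1 + L) * (1 + n\<^sup>2))"
      using \<alpha> assms by (intro mult_left_mono) auto
    then show ?thesis
      by (simp add: algebra_simps)
  qed
  have "\<alpha>\<^sup>2 * H\<^sup>2 \<le> \<alpha> * H\<^sup>2"
    using \<alpha> by (intro mult_right_mono) (auto simp: power2_eq_square mult_left_le_one_le)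
  moreover have "0 \<le> \<alpha> * H\<^sup>2 * n\<^sup>2" and "0 \<le> \<alpha> * L" and "0 \<le> \<alpha> * L\<^sup>2"
    using \<alpha> \<open>0 \<le> L\<close> by simp_all
  moreover have "(1 + \<alpha> * L)\<^sup>2 * n\<^sup>2 \<le> (1 + \<alpha> * (2 * L + L\<^sup>2)) * n\<^sup>2"
    using square by (rule mult_right_mono) simp
  ultimately show ?thesis
    using cross by (simp add: c_def power2_eq_square algebra_simps)
qed

lemma scaled_step_sq_le:
  fixes u v m :: "'a::real_normed_vector" and \<alpha> L H \<rho> :: real
  defines "c \<equiv> 1 + 2 * (2 * L + L\<^sup>2 + (1 + L) * H + H\<^sup>2)"
  assumes \<alpha>: "0 \<le> \<alpha>" "\<alpha> \<le> 1" and "0 \<le> L" and "0 \<le> H" and \<rho>: "1 \<le> \<rho>"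
    and drift: "norm v \<le> H + L * norm u"
  shows "(norm (u + \<alpha> *\<^sub>R (v + m)) / \<rho>)\<^sup>2
    \<le> (1 + c * \<alpha>) * (norm u / \<rho>)\<^sup>2 + c * \<alpha> + 2 * \<alpha> * (norm m / \<rho>)\<^sup>2"
proof -
  define c' where "c' = 2 * L + L\<^sup>2 + (1 + L) * H + H\<^sup>2"
  have c': "0 \<le> c'"
    using assms by (simp add: c'_def)
  have c: "c = 1 + 2 * c'"
    by (simp add: c_def c'_def)
  define n where "n = norm u / \<rho>"
  have n: "0 \<le> n"
    using \<rho> by (simp add: n_def)
  define W where "W = (1 + \<alpha> * L) * n + \<alpha> * H"
  have "norm (u + \<alpha> *\<^sub>R (v + m)) \<le> norm u + \<alpha> * norm v + \<alpha> * norm m"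
    using norm_triangle_ineq[of u "\<alpha> *\<^sub>R v + \<alpha> *\<^sub>R m"] norm_triangle_ineq[of "\<alpha> *\<^sub>R v" "\<alpha> *\<^sub>R m"] \<alpha>
    by (simp add: scaleR_add_right)
  also have "\<dots> \<le> (1 + \<alpha> * L) * norm u + \<alpha> * H + \<alpha> * norm m"
    using mult_left_mono[OF drift \<alpha>(1)] by (simp add: algebra_simps)
  also have "\<dots> \<le> ((1 + \<alpha> * L) * norm u + \<alpha> * H * \<rho> + \<alpha> * norm m)"
    using mult_left_mono[OF \<rho>, of "\<alpha> * H"] \<alpha> \<open>0 \<le> H\<close> by simp
  finally have "norm (u + \<alpha> *\<^sub>R (v + m)) / \<rho> \<le> W + \<alpha> * (norm m / \<rho>)"
    using \<rho> by (simp add: W_def n_def divide_simps)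
  then have "(norm (u + \<alpha> *\<^sub>R (v + m)) / \<rho>)\<^sup>2 \<le> (W + \<alpha> * (norm m / \<rho>))\<^sup>2"
    using \<rho> by (intro power_mono) auto
  also have "\<dots> \<le> (1 + \<alpha>) * W\<^sup>2 + 2 * \<alpha> * (norm m / \<rho>)\<^sup>2"
    using \<alpha> by (rule sq_add_scaled_le)
  also have "(1 + \<alpha>) * W\<^sup>2 \<le> (1 + \<alpha>) * ((1 + c' * \<alpha>) * n\<^sup>2 + c' * \<alpha>)"
    unfolding W_def c'_def using \<alpha> assms n by (intro mult_left_mono sq_affine_le) auto
  also have "\<dots> \<le> (1 + c * \<alpha>) * n\<^sup>2 + c * \<alpha>"
  proof -
    have "c' * \<alpha>\<^sup>2 \<le> c' * \<alpha>"
      using \<alpha> c' by (intro mult_left_mono) (auto simp: power2_eq_square mult_left_le_one_le)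
    moreover have "c' * \<alpha>\<^sup>2 * n\<^sup>2 \<le> c' * \<alpha> * n\<^sup>2"
      using calculation by (rule mult_right_mono) simp
    moreover have "0 \<le> c' * \<alpha>" "0 \<le> \<alpha> * n\<^sup>2" "0 \<le> \<alpha>"
      using \<alpha> c' by auto
    ultimately show ?thesis
      by (simp add: c power2_eq_square algebra_simps)
  qed
  finally show ?thesis
    by (simp add: n_def)
qed

text \<open>Against a bounded \<open>G\<close>-measurable weight, \<open>Z\<close> integrates like \<open>E[Z | G]\<close>.\<close>

lemma nn_integral_mult_le_of_cond_exp_le:
  fixes Z V g :: "'w \<Rightarrow> real"
  assumes P: "prob_space M" and sub: "subalgebra M G"
    and g: "g \<in> borel_measurable G" "\<And>\<omega>. \<omega> \<in> space M \<Longrightarrow> 0 \<le> g \<omega> \<and> g \<omega> \<le> 1"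
    and Z: "Z \<in> borel_measurable M" "\<And>\<omega>. 0 \<le> Z \<omega>" "integrable M Z"
    and V: "V \<in> borel_measurable M"
    and cond_exp_le: "AE \<omega> in M. real_cond_exp M G Z \<omega> \<le> V \<omega>"
  shows "(\<integral>\<^sup>+\<omega>. ennreal (g \<omega> * Z \<omega>) \<partial>M) \<le> (\<integral>\<^sup>+\<omega>. ennreal (g \<omega> * V \<omega>) \<partial>M)"
proof -
  interpret prob_space M by (rule P)
  interpret finite_measure_subalgebra M G
    by unfold_locales (rule sub)
  have gM: "g \<in> borel_measurable M"
    by (rule measurable_from_subalg[OF sub g(1)])
  have int_gZ: "integrable M (\<lambda>\<omega>. g \<omega> * Z \<omega>)"
    by (rule Bochner_Integration.integrable_bound[OF Z(3)])
       (use gM Z g in \<open>auto intro!: mult_left_le_one_le simp: abs_mult\<close>)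
  have int_gE: "integrable M (\<lambda>\<omega>. g \<omega> * real_cond_exp M G Z \<omega>)"
    and eq: "(\<integral>\<omega>. g \<omega> * real_cond_exp M G Z \<omega> \<partial>M) = (\<integral>\<omega>. g \<omega> * Z \<omega> \<partial>M)"
    using real_cond_exp_intg[OF int_gZ g(1) Z(1)] by auto
  have "AE \<omega> in M. 0 \<le> real_cond_exp M G Z \<omega>"
    using Z by (intro real_cond_exp_pos) auto
  then have "(\<integral>\<^sup>+\<omega>. ennreal (g \<omega> * real_cond_exp M G Z \<omega>) \<partial>M)
      = ennreal (\<integral>\<omega>. g \<omega> * real_cond_exp M G Z \<omega> \<partial>M)"
    using g by (intro nn_integral_eq_integral[OF int_gE]) auto
  also have "\<dots> = (\<integral>\<^sup>+\<omega>. ennreal (g \<omega> * Z \<omega>) \<partial>M)"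
    unfolding eq using g Z by (intro nn_integral_eq_integral[OF int_gZ, symmetric]) auto
  finally have "(\<integral>\<^sup>+\<omega>. ennreal (g \<omega> * Z \<omega>) \<partial>M)
      = (\<integral>\<^sup>+\<omega>. ennreal (g \<omega> * real_cond_exp M G Z \<omega>) \<partial>M)" ..
  also have "\<dots> \<le> (\<integral>\<^sup>+\<omega>. ennreal (g \<omega> * V \<omega>) \<partial>M)"
    using cond_exp_le AE_space
    by (intro nn_integral_mono_AE, eventually_elim) (use g in \<open>auto intro!: ennreal_leI mult_left_mono\<close>)
  finally show ?thesis .
qed

lemma discrete_gronwall_ennreal:
  fixes e :: "nat \<Rightarrow> ennreal"
  assumes "0 \<le> C" and a: "\<And>j. 0 \<le> a j"
    and step: "\<And>j. m \<le> j \<Longrightarrow> e (Suc j) \<le> ennreal (1 + C * a j) * e j + ennreal (C * a j)"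
    and "m \<le> j"
  shows "e j + 1 \<le> ennreal (exp (C * (\<Sum>i\<in>{m..<j}. a i))) * (e m + 1)"
  using \<open>m \<le> j\<close>
proof (induction j rule: dec_induct)
  case (step j)
  have Ca: "0 \<le> C * a j"
    using assms a by simp
  have "e (Suc j) + 1 \<le> ennreal (1 + C * a j) * e j + ennreal (C * a j) + 1"
    using assms(3)[OF step.hyps(1)] by (rule add_right_mono)
  also have "\<dots> = ennreal (1 + C * a j) * (e j + 1)"
    using Ca by (simp add: distrib_left ennreal_plus add_ac)
  also have "\<dots> \<le> ennreal (exp (C * a j)) * (e j + 1)"
    by (intro mult_right_mono ennreal_leI) (auto simp: add.commute exp_ge_add_one_self)
  also have "\<dots> \<le> ennreal (exp (C * a j)) * (ennreal (exp (C * (\<Sum>i\<in>{m..<j}. a i))) * (e m + 1))"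
    using step.IH by (rule mult_left_mono) simp
  also have "\<dots> = ennreal (exp (C * a j) * exp (C * (\<Sum>i\<in>{m..<j}. a i))) * (e m + 1)"
    by (simp add: ennreal_mult mult.assoc)
  also have "\<dots> = ennreal (exp (C * (\<Sum>i\<in>{m..<Suc j}. a i))) * (e m + 1)"
    using step.hyps(1) by (simp add: exp_add[symmetric] algebra_simps)
  finally show ?case .
qed simp

lemma (in prob_space) nn_integral_affine:
  assumes "f \<in> borel_measurable M" and "g \<in> borel_measurable M"
  shows "(\<integral>\<^sup>+\<omega>. A * ennreal (f \<omega>) + B + D * ennreal (g \<omega>) \<partial>M)
    = A * (\<integral>\<^sup>+\<omega>. ennreal (f \<omega>) \<partial>M) + B + D * (\<integral>\<^sup>+\<omega>. ennreal (g \<omega>) \<partial>M)"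
proof -
  note assms[measurable]
  have "(\<integral>\<^sup>+\<omega>. A * ennreal (f \<omega>) + B + D * ennreal (g \<omega>) \<partial>M)
      = (\<integral>\<^sup>+\<omega>. A * ennreal (f \<omega>) + B \<partial>M) + (\<integral>\<^sup>+\<omega>. D * ennreal (g \<omega>) \<partial>M)"
    by (rule nn_integral_add) measurable
  also have "(\<integral>\<^sup>+\<omega>. A * ennreal (f \<omega>) + B \<partial>M) = (\<integral>\<^sup>+\<omega>. A * ennreal (f \<omega>) \<partial>M) + (\<integral>\<^sup>+\<omega>. B \<partial>M)"
    by (rule nn_integral_add) measurable
  finally show ?thesis
    by (simp add: nn_integral_cmult emeasure_space_1)
qed

lemma ennreal_affine_regroup:
  fixes \<alpha> c K :: real and E :: ennreal
  assumes "0 \<le> \<alpha>" and "0 \<le> c" and "0 \<le> K"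
  shows "ennreal (1 + c * \<alpha>) * E + ennreal (c * \<alpha>) + ennreal (2 * \<alpha>) * (ennreal K * (1 + E))
    = ennreal (1 + (c + 2 * K) * \<alpha>) * E + ennreal ((c + 2 * K) * \<alpha>)"
proof -
  have "ennreal (2 * K * \<alpha>) = ennreal (2 * \<alpha>) * ennreal K"
    using assms by (simp add: ennreal_mult[symmetric] mult_ac)
  then have noise: "ennreal (2 * \<alpha>) * (ennreal K * e) = ennreal (2 * K * \<alpha>) * e" for e
    by (simp add: mult.assoc)
  have "ennreal (1 + (c + 2 * K) * \<alpha>) = ennreal (1 + c * \<alpha>) + ennreal (2 * K * \<alpha>)"
    and "ennreal ((c + 2 * K) * \<alpha>) = ennreal (c * \<alpha>) + ennreal (2 * K * \<alpha>)"
    using assms by (subst ennreal_plus[symmetric]; simp add: algebra_simps)+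
  then show ?thesis
    unfolding noise by (simp add: algebra_simps)
qed

section \<open>Second moments of the rescaled iterates\<close>

locale sa_process = prob_space M + step_sizes a + filtration "space M" F
  for M :: "'w measure" and a :: "nat \<Rightarrow> real" and F :: "nat \<Rightarrow> 'w measure" +
  fixes S :: "'s::metric_space set"
    and h :: "'d::euclidean_space \<Rightarrow> 's \<Rightarrow> 'd"
    and y :: "nat \<Rightarrow> 'w \<Rightarrow> 's"
    and x Mn :: "nat \<Rightarrow> 'w \<Rightarrow> 'd"
    and L K :: real
  assumes S_compact: "compact S"
    and h_cont: "continuous_on (UNIV \<times> S) (\<lambda>(u, v). h u v)"
    and L_nonneg: "0 \<le> L"
    and h_lip: "\<And>x1 x2 v. v \<in> S \<Longrightarrow> norm (h x1 v - h x2 v) \<le> L * norm (x1 - x2)"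
    and subalg: "\<And>n. subalgebra M (F n)"
    and y_meas: "\<And>n. y n \<in> borel_measurable (F n)"
    and y_in_S: "\<And>n \<omega>. \<omega> \<in> space M \<Longrightarrow> y n \<omega> \<in> S"
    and x0_meas: "x 0 \<in> borel_measurable (F 0)"
    and Mn_meas: "\<And>n. Mn (Suc n) \<in> borel_measurable (F (Suc n))"
    and Mn_sq_int: "\<And>n. integrable M (\<lambda>\<omega>. (norm (Mn (Suc n) \<omega>))\<^sup>2)"
    and K_nonneg: "0 \<le> K"
    and Mn_var: "\<And>n. AE \<omega> in M. real_cond_exp M (F n) (\<lambda>\<omega>. (norm (Mn (Suc n) \<omega>))\<^sup>2) \<omega>
                          \<le> K * (1 + (norm (x n \<omega>))\<^sup>2)"
    and x_rec: "\<And>n \<omega>. \<omega> \<in> space M \<Longrightarrow>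
                   x (Suc n) \<omega> = x n \<omega> + a n *\<^sub>R (h (x n \<omega>) (y n \<omega>) + Mn (Suc n) \<omega>)"
begin

definition scaled_moment :: "('w \<Rightarrow> real) \<Rightarrow> nat \<Rightarrow> ennreal" where
  "scaled_moment \<rho> j = (\<integral>\<^sup>+\<omega>. ennreal ((norm (x j \<omega>) / \<rho> \<omega>)\<^sup>2) \<partial>M)"

lemma measurable_F_mono:
  fixes f :: "'w \<Rightarrow> 'b::topological_space"
  assumes "j \<le> k" and "f \<in> borel_measurable (F j)"
  shows "f \<in> borel_measurable (F k)"
  using assms sets_F_mono[OF assms(1)] space_F
  by (intro measurable_from_subalg[OF _ assms(2)]) (auto simp: subalgebra_def)

lemma h_continuous_first:
  assumes "v \<in> S"
  shows "isCont (\<lambda>u. h u v) u"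
proof -
  have "continuous_on UNIV ((\<lambda>(u, v). h u v) \<circ> (\<lambda>u. (u, v)))"
    by (rule continuous_on_compose[OF _ continuous_on_subset[OF h_cont]])
       (use assms in \<open>auto intro!: continuous_intros\<close>)
  then show ?thesis
    by (simp add: o_def continuous_on_eq_continuous_at)
qed

lemma h_continuous_second: "continuous_on S (h u)"
proof -
  have "continuous_on S ((\<lambda>(u, v). h u v) \<circ> (\<lambda>v. (u, v)))"
    by (rule continuous_on_compose[OF _ continuous_on_subset[OF h_cont]])
       (auto intro!: continuous_intros)
  then show ?thesis
    by (simp add: o_def)
qed

lemma x_measurable_F: "x j \<in> borel_measurable (F j)"
proof (induction j)
  case (Suc j)
  have x: "x j \<in> borel_measurable (F (Suc j))"
    using Suc by (rule measurable_F_mono[rotated]) simp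
  have y: "y j \<in> borel_measurable (F (Suc j))"
    using y_meas by (rule measurable_F_mono[rotated]) simp
  have y_in_S': "y j \<omega> \<in> S" if "\<omega> \<in> space (F (Suc j))" for \<omega>
    using that y_in_S by (simp add: space_F)
  have "(\<lambda>\<omega>. h (x j \<omega>) (y j \<omega>)) \<in> borel_measurable (F (Suc j))"
    using borel_measurable_caratheodory[OF h_continuous_first h_continuous_second x y y_in_S'] .
  then have "(\<lambda>\<omega>. x j \<omega> + a j *\<^sub>R (h (x j \<omega>) (y j \<omega>) + Mn (Suc j) \<omega>)) \<in> borel_measurable (F (Suc j))"
    using x Mn_meas[of j] by measurable
  then show ?case
    by (rule measurable_cong[THEN iffD1, rotated]) (simp add: space_F x_rec)
qed (rule x0_meas)

lemma x_measurable [measurable]: "x j \<in> borel_measurable M"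
  by (rule measurable_from_subalg[OF subalg x_measurable_F])

lemma Mn_measurable [measurable]: "Mn (Suc j) \<in> borel_measurable M"
  by (rule measurable_from_subalg[OF subalg Mn_meas])

lemma h_linear_growth:
  obtains H where "0 \<le> H" and "\<And>u v. v \<in> S \<Longrightarrow> norm (h u v) \<le> H + L * norm u"
proof -
  have "compact (h 0 ` S)"
    using S_compact h_continuous_second by (rule compact_continuous_image[rotated])
  then obtain H where "0 < H" "\<forall>z \<in> h 0 ` S. norm z \<le> H"
    using compact_imp_bounded bounded_pos by blast
  then have H: "0 < H" "\<And>v. v \<in> S \<Longrightarrow> norm (h 0 v) \<le> H"
    by auto
  have "norm (h u v) \<le> H + L * norm u" if "v \<in> S" for u v
    using norm_triangle_ineq[of "h 0 v" "h u v - h 0 v"] H(2)[OF that] h_lip[OF that, of u 0]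
    by simp
  then show ?thesis
    using H(1) by (intro that[of H]) auto
qed

lemma noise_scaled_moment_le:
  assumes \<rho>: "\<rho> \<in> borel_measurable (F j)" "\<And>\<omega>. 1 \<le> \<rho> \<omega>"
  shows "(\<integral>\<^sup>+\<omega>. ennreal ((norm (Mn (Suc j) \<omega>) / \<rho> \<omega>)\<^sup>2) \<partial>M) \<le> ennreal K * (1 + scaled_moment \<rho> j)"
proof -
  have [measurable]: "\<rho> \<in> borel_measurable M"
    by (rule measurable_from_subalg[OF subalg \<rho>(1)])
  have weight: "0 \<le> 1 / (\<rho> \<omega>)\<^sup>2 \<and> 1 / (\<rho> \<omega>)\<^sup>2 \<le> 1" for \<omega>
    using \<rho>(2)[of \<omega>] by (simp add: divide_le_eq_1 one_le_power)
  have "(\<integral>\<^sup>+\<omega>. ennreal ((norm (Mn (Suc j) \<omega>) / \<rho> \<omega>)\<^sup>2) \<partial>M)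
      = (\<integral>\<^sup>+\<omega>. ennreal (1 / (\<rho> \<omega>)\<^sup>2 * (norm (Mn (Suc j) \<omega>))\<^sup>2) \<partial>M)"
    by (simp add: power_divide)
  also have "\<dots> \<le> (\<integral>\<^sup>+\<omega>. ennreal (1 / (\<rho> \<omega>)\<^sup>2 * (K * (1 + (norm (x j \<omega>))\<^sup>2))) \<partial>M)"
    using \<rho>(1) weight Mn_sq_int Mn_var
    by (intro nn_integral_mult_le_of_cond_exp_le[OF prob_space_axioms subalg]) auto
  also have "\<dots> \<le> (\<integral>\<^sup>+\<omega>. ennreal K * (1 + ennreal ((norm (x j \<omega>) / \<rho> \<omega>)\<^sup>2)) \<partial>M)"
  proof (rule nn_integral_mono)
    fix \<omega>
    have "1 / (\<rho> \<omega>)\<^sup>2 * (K * (1 + (norm (x j \<omega>))\<^sup>2)) = K * (1 / (\<rho> \<omega>)\<^sup>2) + K * (norm (x j \<omega>) / \<rho> \<omega>)\<^sup>2"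
      by (simp add: power_divide add_divide_distrib distrib_left)
    also have "\<dots> \<le> K * (1 + (norm (x j \<omega>) / \<rho> \<omega>)\<^sup>2)"
      using mult_left_le[of "1 / (\<rho> \<omega>)\<^sup>2" K] weight[of \<omega>] K_nonneg by (simp add: distrib_left)
    finally have "ennreal (1 / (\<rho> \<omega>)\<^sup>2 * (K * (1 + (norm (x j \<omega>))\<^sup>2)))
        \<le> ennreal (K * (1 + (norm (x j \<omega>) / \<rho> \<omega>)\<^sup>2))"
      by (rule ennreal_leI)
    also have "\<dots> = ennreal K * (1 + ennreal ((norm (x j \<omega>) / \<rho> \<omega>)\<^sup>2))"
      using K_nonneg by (simp add: ennreal_mult ennreal_plus)
    finally show "ennreal (1 / (\<rho> \<omega>)\<^sup>2 * (K * (1 + (norm (x j \<omega>))\<^sup>2)))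
        \<le> ennreal K * (1 + ennreal ((norm (x j \<omega>) / \<rho> \<omega>)\<^sup>2))" .
  qed
  also have "\<dots> = ennreal K * (\<integral>\<^sup>+\<omega>. 1 + ennreal ((norm (x j \<omega>) / \<rho> \<omega>)\<^sup>2) \<partial>M)"
    by (rule nn_integral_cmult) measurable
  also have "(\<integral>\<^sup>+\<omega>. 1 + ennreal ((norm (x j \<omega>) / \<rho> \<omega>)\<^sup>2) \<partial>M) = 1 + scaled_moment \<rho> j"
  proof -
    have "(\<integral>\<^sup>+\<omega>. 1 + ennreal ((norm (x j \<omega>) / \<rho> \<omega>)\<^sup>2) \<partial>M)
        = (\<integral>\<^sup>+\<omega>. 1 \<partial>M) + scaled_moment \<rho> j"
      unfolding scaled_moment_def by (rule nn_integral_add) measurable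
    then show ?thesis
      by (simp add: emeasure_space_1)
  qed
  finally show ?thesis .
qed

lemma scaled_moment_Suc_le:
  fixes H :: real
  defines "c \<equiv> 1 + 2 * (2 * L + L\<^sup>2 + (1 + L) * H + H\<^sup>2)"
  assumes H: "0 \<le> H" "\<And>u v. v \<in> S \<Longrightarrow> norm (h u v) \<le> H + L * norm u"
    and \<rho>: "\<rho> \<in> borel_measurable (F j)" "\<And>\<omega>. 1 \<le> \<rho> \<omega>"
  shows "scaled_moment \<rho> (Suc j) \<le> ennreal (1 + c * a j) * scaled_moment \<rho> j + ennreal (c * a j)
    + ennreal (2 * a j) * (\<integral>\<^sup>+\<omega>. ennreal ((norm (Mn (Suc j) \<omega>) / \<rho> \<omega>)\<^sup>2) \<partial>M)"
proof -
  have [measurable]: "\<rho> \<in> borel_measurable M"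
    by (rule measurable_from_subalg[OF subalg \<rho>(1)])
  have aj: "0 \<le> a j" "a j \<le> 1"
    using a_pos[of j] a_le1[of j] by auto
  have c: "0 \<le> c"
    using H L_nonneg by (simp add: c_def)
  let ?X = "\<lambda>\<omega>. (norm (x j \<omega>) / \<rho> \<omega>)\<^sup>2"
  let ?N = "\<lambda>\<omega>. (norm (Mn (Suc j) \<omega>) / \<rho> \<omega>)\<^sup>2"
  have "(norm (x (Suc j) \<omega>) / \<rho> \<omega>)\<^sup>2 \<le> (1 + c * a j) * ?X \<omega> + c * a j + 2 * a j * ?N \<omega>"
    if "\<omega> \<in> space M" for \<omega>
    unfolding x_rec[OF that] c_def
    by (rule scaled_step_sq_le[OF aj L_nonneg H(1) \<rho>(2) H(2)[OF y_in_S[OF that]]])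
  then have "scaled_moment \<rho> (Suc j)
      \<le> (\<integral>\<^sup>+\<omega>. ennreal (1 + c * a j) * ?X \<omega> + ennreal (c * a j) + ennreal (2 * a j) * ?N \<omega> \<partial>M)"
    unfolding scaled_moment_def using aj c
    by (intro nn_integral_mono) (simp add: ennreal_mult[symmetric] ennreal_plus[symmetric] ennreal_leI del: ennreal_plus)
  also have "\<dots> = ennreal (1 + c * a j) * scaled_moment \<rho> j + ennreal (c * a j)
      + ennreal (2 * a j) * (\<integral>\<^sup>+\<omega>. ?N \<omega> \<partial>M)"
    unfolding scaled_moment_def by (rule nn_integral_affine) measurable
  finally show ?thesis .
qed

lemma scaled_moment_step:
  obtains C where "0 \<le> C"
    and "\<And>j \<rho>. \<rho> \<in> borel_measurable (F j) \<Longrightarrow> (\<And>\<omega>. 1 \<le> \<rho> \<omega>) \<Longrightarrow>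
      scaled_moment \<rho> (Suc j) \<le> ennreal (1 + C * a j) * scaled_moment \<rho> j + ennreal (C * a j)"
proof -
  obtain H where H: "0 \<le> H" "\<And>u v. v \<in> S \<Longrightarrow> norm (h u v) \<le> H + L * norm u"
    using h_linear_growth by blast
  define c where "c = 1 + 2 * (2 * L + L\<^sup>2 + (1 + L) * H + H\<^sup>2)"
  have c: "0 \<le> c"
    using H L_nonneg by (simp add: c_def)
  show ?thesis
  proof (rule that[of "c + 2 * K"])
    show "0 \<le> c + 2 * K"
      using c K_nonneg by simp
    fix j :: nat and \<rho> :: "'w \<Rightarrow> real"
    assume \<rho>: "\<rho> \<in> borel_measurable (F j)" "\<And>\<omega>. 1 \<le> \<rho> \<omega>"
    have "scaled_moment \<rho> (Suc j) \<le> ennreal (1 + c * a j) * scaled_moment \<rho> j + ennreal (c * a j)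
        + ennreal (2 * a j) * (\<integral>\<^sup>+\<omega>. ennreal ((norm (Mn (Suc j) \<omega>) / \<rho> \<omega>)\<^sup>2) \<partial>M)"
      unfolding c_def by (rule scaled_moment_Suc_le[OF H \<rho>])
    also have "\<dots> \<le> ennreal (1 + c * a j) * scaled_moment \<rho> j + ennreal (c * a j)
        + ennreal (2 * a j) * (ennreal K * (1 + scaled_moment \<rho> j))"
      using noise_scaled_moment_le[OF \<rho>] by (intro add_left_mono mult_left_mono) auto
    also have "\<dots> = ennreal (1 + (c + 2 * K) * a j) * scaled_moment \<rho> j + ennreal ((c + 2 * K) * a j)"
      using a_pos[of j] c K_nonneg by (intro ennreal_affine_regroup) auto
    finally show "scaled_moment \<rho> (Suc j)
        \<le> ennreal (1 + (c + 2 * K) * a j) * scaled_moment \<rho> j + ennreal ((c + 2 * K) * a j)" .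
  qed
qed

lemma scaled_moment_bound:
  assumes C: "0 \<le> C"
    and step: "\<And>j \<rho>. \<rho> \<in> borel_measurable (F j) \<Longrightarrow> (\<And>\<omega>. 1 \<le> \<rho> \<omega>) \<Longrightarrow>
      scaled_moment \<rho> (Suc j) \<le> ennreal (1 + C * a j) * scaled_moment \<rho> j + ennreal (C * a j)"
    and \<rho>: "\<rho> \<in> borel_measurable (F m)" "\<And>\<omega>. 1 \<le> \<rho> \<omega>" "\<And>\<omega>. norm (x m \<omega>) \<le> \<rho> \<omega>"
    and "m \<le> j"
  shows "scaled_moment \<rho> j \<le> ennreal (2 * exp (C * (\<Sum>i\<in>{m..<j}. a i)))"
proof -
  have start: "scaled_moment \<rho> m \<le> 1"
  proof -
    have "scaled_moment \<rho> m \<le> (\<integral>\<^sup>+\<omega>. ennreal 1 \<partial>M)"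
      unfolding scaled_moment_def
    proof (intro nn_integral_mono ennreal_leI)
      fix \<omega>
      show "(norm (x m \<omega>) / \<rho> \<omega>)\<^sup>2 \<le> 1"
        using \<rho>(2,3)[of \<omega>] by (intro power_le_one) (auto simp: divide_le_eq_1)
    qed
    then show ?thesis
      by (simp add: emeasure_space_1)
  qed
  have "scaled_moment \<rho> j \<le> scaled_moment \<rho> j + 1"
    by simp
  also have "\<dots> \<le> ennreal (exp (C * (\<Sum>i\<in>{m..<j}. a i))) * (scaled_moment \<rho> m + 1)"
    by (rule discrete_gronwall_ennreal[where e = "scaled_moment \<rho>", OF C less_imp_le[OF a_pos]
          step[OF measurable_F_mono[OF _ \<rho>(1)] \<rho>(2)] \<open>m \<le> j\<close>])
  also have "\<dots> \<le> ennreal (exp (C * (\<Sum>i\<in>{m..<j}. a i))) * 2"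
    using start by (intro mult_left_mono) (auto simp: one_add_one[symmetric] simp del: one_add_one)
  finally show ?thesis
    by (simp add: ennreal_mult' mult.commute)
qed

lemma sa_r_measurable: "sa_r a T x n \<in> borel_measurable (F (sa_T_index a T n))"
proof -
  have "sa_r a T x n = (\<lambda>\<omega>. max (norm (x (sa_T_index a T n) \<omega>)) 1)"
    by (simp add: fun_eq_iff sa_r_eq)
  then show ?thesis
    using x_measurable_F by simp
qed

lemma scaled_moment_within_block_le:
  assumes "0 < T" and C: "0 \<le> C"
    and step: "\<And>j \<rho>. \<rho> \<in> borel_measurable (F j) \<Longrightarrow> (\<And>\<omega>. 1 \<le> \<rho> \<omega>) \<Longrightarrow>
      scaled_moment \<rho> (Suc j) \<le> ennreal (1 + C * a j) * scaled_moment \<rho> j + ennreal (C * a j)"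
    and j: "sa_T_index a T n \<le> j" "j \<le> sa_T_index a T (Suc n)"
  shows "scaled_moment (sa_r a T x n) j \<le> ennreal (2 * exp (C * (T + 1)))"
proof -
  have "scaled_moment (sa_r a T x n) j
      \<le> ennreal (2 * exp (C * (\<Sum>i\<in>{sa_T_index a T n..<j}. a i)))"
    by (rule scaled_moment_bound[OF C step sa_r_measurable]) (simp_all add: sa_r_eq j)
  also have "\<dots> \<le> ennreal (2 * exp (C * (T + 1)))"
    using mult_left_mono[OF sum_a_within_block[OF assms(1) refl j(2)] C]
    by (intro ennreal_leI) simp
  finally show ?thesis .
qed

lemma sa_xhat_second_moment_bounded:
  assumes "0 < T"
  obtains B where "\<And>t. 0 \<le> t \<Longrightarrow> (\<integral>\<^sup>+\<omega>. ennreal ((norm (sa_xhat a T x t \<omega>))\<^sup>2) \<partial>M) \<le> ennreal B"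
proof -
  obtain C where C: "0 \<le> C"
    and step: "\<And>j \<rho>. \<rho> \<in> borel_measurable (F j) \<Longrightarrow> (\<And>\<omega>. 1 \<le> \<rho> \<omega>) \<Longrightarrow>
      scaled_moment \<rho> (Suc j) \<le> ennreal (1 + C * a j) * scaled_moment \<rho> j + ennreal (C * a j)"
    using scaled_moment_step by blast
  define B where "B = 2 * exp (C * (T + 1))"
  have "(\<integral>\<^sup>+\<omega>. ennreal ((norm (sa_xhat a T x t \<omega>))\<^sup>2) \<partial>M) \<le> ennreal (2 * B)" if "0 \<le> t" for t
  proof -
    define n where "n = sa_block a T t"
    define k where "k = sa_idx a t"
    have [measurable]: "sa_r a T x n \<in> borel_measurable M"
      by (rule measurable_from_subalg[OF subalg sa_r_measurable])
    have "(\<integral>\<^sup>+\<omega>. ennreal ((norm (sa_xhat a T x t \<omega>))\<^sup>2) \<partial>M)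
        \<le> scaled_moment (sa_r a T x n) k + scaled_moment (sa_r a T x n) (Suc k)"
      unfolding scaled_moment_def using sa_xhat_sq_le[OF that, where x = x and T = T, folded n_def k_def]
      by (subst nn_integral_add[symmetric])
         (auto simp: ennreal_plus[symmetric] simp del: ennreal_plus intro!: nn_integral_mono ennreal_leI)
    also have "\<dots> \<le> ennreal B + ennreal B"
      using sa_idx_within_block[OF assms that] unfolding B_def
      by (intro add_mono scaled_moment_within_block_le[OF assms C step]) (auto simp: k_def n_def)
    finally show ?thesis
      unfolding B_def by (simp add: ennreal_plus[symmetric] del: ennreal_plus)
  qed
  then show ?thesis
    using that by blast
qed

end

theorem lemma3:
  fixes M :: "'w measure"
    and F :: "nat \<Rightarrow> 'w measure"
    and S :: "'s::metric_space set"
    and h :: "'d::euclidean_space \<Rightarrow> 's \<Rightarrow> 'd"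
    and a :: "nat \<Rightarrow> real"
    and y :: "nat \<Rightarrow> 'w \<Rightarrow> 's"
    and x :: "nat \<Rightarrow> 'w \<Rightarrow> 'd"
    and Mn :: "nat \<Rightarrow> 'w \<Rightarrow> 'd"
    and L K T :: real
  assumes S_compact: "compact S"
    and h_cont: "continuous_on (UNIV \<times> S) (\<lambda>(u, v). h u v)"
    and L_pos: "L > 0"
    and h_lip: "\<And>x1 x2 v. v \<in> S \<Longrightarrow> norm (h x1 v - h x2 v) \<le> L * norm (x1 - x2)"
    and a_pos: "\<And>n. a n > 0"
    and a_not_summable: "\<not> summable a"
    and a_sq_summable: "summable (\<lambda>n. (a n)\<^sup>2)"
    and a_le1: "\<And>n. a n \<le> 1"
    and prob: "prob_space M"
    and filt: "filtration (space M) F"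
    and subalg: "\<And>n. subalgebra M (F n)"
    and y_meas: "\<And>n. y n \<in> borel_measurable (F n)"
    and y_in_S: "\<And>n \<omega>. \<omega> \<in> space M \<Longrightarrow> y n \<omega> \<in> S"
    and x0_meas: "x 0 \<in> borel_measurable (F 0)"
    and Mn_meas: "\<And>n. Mn (Suc n) \<in> borel_measurable (F (Suc n))"
    and Mn_sq_int: "\<And>n. integrable M (\<lambda>\<omega>. (norm (Mn (Suc n) \<omega>))\<^sup>2)"
    and Mn_mds: "\<And>n i. i \<in> Basis \<Longrightarrow>
                   AE \<omega> in M. real_cond_exp M (F n) (\<lambda>\<omega>. Mn (Suc n) \<omega> \<bullet> i) \<omega> = 0"
    and K_pos: "K > 0"
    and Mn_var: "\<And>n. AE \<omega> in M. real_cond_exp M (F n) (\<lambda>\<omega>. (norm (Mn (Suc n) \<omega>))\<^sup>2) \<omega>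
                          \<le> K * (1 + (norm (x n \<omega>))\<^sup>2)"
    and x_rec: "\<And>n \<omega>. \<omega> \<in> space M \<Longrightarrow>
                   x (Suc n) \<omega> = x n \<omega> + a n *\<^sub>R (h (x n \<omega>) (y n \<omega>) + Mn (Suc n) \<omega>)"
    and T_pos: "T > 0"
  shows "(SUP t\<in>{0..}. \<integral>\<^sup>+ \<omega>. ennreal ((norm (sa_xhat a T x t \<omega>))\<^sup>2) \<partial>M) < \<infinity>"
proof -
  interpret sa_process M a F S h y x Mn L K
    by (rule sa_process.intro[OF prob step_sizes.intro[OF a_pos a_not_summable a_le1] filt
          sa_process_axioms.intro[OF S_compact h_cont less_imp_le[OF L_pos] h_lip subalg y_meas
            y_in_S x0_meas Mn_meas Mn_sq_int less_imp_le[OF K_pos] Mn_var x_rec]])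
  obtain B where "\<And>t. 0 \<le> t \<Longrightarrow> (\<integral>\<^sup>+\<omega>. ennreal ((norm (sa_xhat a T x t \<omega>))\<^sup>2) \<partial>M) \<le> ennreal B"
    using sa_xhat_second_moment_bounded[OF T_pos] by blast
  then have "(SUP t\<in>{0..}. \<integral>\<^sup>+ \<omega>. ennreal ((norm (sa_xhat a T x t \<omega>))\<^sup>2) \<partial>M) \<le> ennreal B"
    by (intro SUP_least) auto
  also have "\<dots> < \<infinity>"
    by simp
  finally show ?thesis .
qed

end
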